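(* Let $q\in(1,+\infty)$ and $T>0$. Let $(x_i)_{i\in\mathbb N}$, $(v_i)_{i\in\mathbb N}$ be sequences with $x_i<0$, $v_i>0$, $|x_i|/v_i\to0$, and $\frac{v_i^{2q-1}}{|x_i|^{q-1}}>c$ for all $i$, for a given constant $c>0$. Let $(w_i)_{i\in\mathbb N}$ satisfy $0\le w_i\le v_i$ and $w_i/v_i\to0$. For $\theta\in(0,T]$ let $$I_i(\theta,w_i)=\inf\Big\{\frac1q\int_0^\theta|\eta'(s)|^q ds:\ \eta\in W^{1,q}(0,\theta;\mathbb R),\ \eta(0)=v_i,\ \eta(\theta)=w_i,\ \eta\ge w_i\text{ on }[0,\theta],\ x_i+\int_0^\theta\eta(s)ds\le0\Big\}.$$ Then: (i) as $i\to\infty$, $$\inf_{\theta\in(0,T]}I_i(\theta,w_i)\sim\frac{q^{q-1}}{(2q-1)^q}\frac{v_i^{2q-1}}{|x_i|^{q-1}};$$ (ii) if moreover $q=2$ and $\frac{v_i^2w_i}{|x_i|}\to0$, then $$\inf_{\theta\in(0,T]}I_i(\theta,w_i)=\frac29\frac{v_i^3}{|x_i|}+O\!\left(\frac{v_i^2w_i}{|x_i|}\right).$$ *)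

theory Defs
  imports "HOL-Analysis.Analysis" "HOL-Library.Landau_Symbols"
begin

definition sobolev_W1q :: "real \<Rightarrow> real \<Rightarrow> (real \<Rightarrow> real) \<Rightarrow> (real \<Rightarrow> real) \<Rightarrow> bool" where
  "sobolev_W1q q \<theta> \<eta> g \<longleftrightarrow>
     g absolutely_integrable_on {0..\<theta>} \<and>
     (\<lambda>s. \<bar>g s\<bar> powr q) integrable_on {0..\<theta>} \<and>
     (\<forall>t\<in>{0..\<theta>}. \<eta> t = \<eta> 0 + integral {0..t} g)"

text \<open>I(theta,w) for data x, v; the infimum of the empty set is +infinity.\<close>
definition I_cost :: "real \<Rightarrow> real \<Rightarrow> real \<Rightarrow> real \<Rightarrow> real \<Rightarrow> ereal" where
  "I_cost q x v \<theta> w =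
     (INF p \<in> {(\<eta>, g). sobolev_W1q q \<theta> \<eta> g \<and> \<eta> 0 = v \<and> \<eta> \<theta> = w \<and>
                      (\<forall>s\<in>{0..\<theta>}. w \<le> \<eta> s) \<and> x + integral {0..\<theta>} \<eta> \<le> 0}.
        ereal ((1 / q) * integral {0..\<theta>} (\<lambda>s. \<bar>snd p s\<bar> powr q)))"

definition J_cost :: "real \<Rightarrow> real \<Rightarrow> real \<Rightarrow> real \<Rightarrow> real \<Rightarrow> ereal" where
  "J_cost q T x v w = (INF \<theta> \<in> {0<..T}. I_cost q x v \<theta> w)"

end

(*
  Write p = q / (q - 1) for the conjugate exponent, V = v - w and X = |x|.

  Lower bound, by duality.  For a > 0 and b = min a theta, integrating the derivative of
  eta against the weight a - t and integrating by parts turns the mass constraint into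
  a V - X <= - int_0^b (a - t) eta'(t) dt.  Young's inequality with a multiplier mu >= 0
  bounds the right-hand side by mu^p a^(p+1) / (p (p+1)) + (1/q) int |eta'|^q, and the
  optimal a = (p+1) X / V and mu give, uniformly in theta,
    I(theta, w) >= K V^(2q-1) / X^(q-1),   K = (1/q) (p/(p+1))^q = q^(q-1) / (2q-1)^q.

  The profile eta(s) = w + V ((theta - s) / theta)^p with
  theta = (p+1) X / (v + p w) exhausts the mass constraint and costs
  K V^q (v + p w)^(q-1) / X^(q-1); since X / v -> 0, this theta lies in (0, T] eventually.

  As w / v -> 0 both bounds are asymptotic to K v^(2q-1) / X^(q-1).  For q = 2 they are
  (2/9) (v-w)^3 / X and (2/9) (v-w)^2 (v+2w) / X, both within (2/3) v^2 w / X of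
  (2/9) v^3 / X.
*)

theory Submission
  imports Defs
begin

lemma absolutely_integrable_continuous_mult_real:
  fixes g h :: "real \<Rightarrow> real"
  assumes "g absolutely_integrable_on {a..b}" and "continuous_on {a..b} h"
  shows "(\<lambda>t. h t * g t) absolutely_integrable_on {a..b}"
proof (rule absolutely_integrable_bounded_measurable_product_real[OF _ _ _ assms(1)])
  show "h \<in> borel_measurable (lebesgue_on {a..b})"
    using assms(2) by (simp add: continuous_imp_measurable_on_sets_lebesgue)
  show "bounded (h ` {a..b})"
    using assms(2) by (simp add: compact_continuous_image compact_imp_bounded)
qed auto

lemma integrable_on_affine_weight:
  fixes g :: "real \<Rightarrow> real"
  assumes "g absolutely_integrable_on {a..b}" and "a \<le> c" "d \<le> b"
  shows "(\<lambda>t. (y - t) * g t) integrable_on {c..d}"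
proof -
  have "g absolutely_integrable_on {c..d}"
    using absolutely_integrable_on_subinterval[OF assms(1)] assms(2,3) by auto
  then have "(\<lambda>t. (y - t) * g t) absolutely_integrable_on {c..d}"
    by (rule absolutely_integrable_continuous_mult_real) (intro continuous_intros)
  then show ?thesis by (simp add: absolutely_integrable_on_def)
qed

lemma integral_interval_diff_real:
  fixes f :: "real \<Rightarrow> real"
  assumes "f integrable_on {a..b}" and "a \<le> s" "s \<le> y" "y \<le> b"
  shows "integral {s..y} f = integral {a..y} f - integral {a..s} f"
  \<comment> \<open>the unqualified name \<open>integral_combine\<close> denotes the Lebesgue-integral version\<close>
  using Henstock_Kurzweil_Integration.integral_combine[of a s y f]
    integrable_on_subinterval[OF assms(1), of a y] assms
  by simp

lemma integral_affine_weight_remainder_bound: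
  fixes g :: "real \<Rightarrow> real"
  assumes g: "g absolutely_integrable_on {a..b}" and "a \<le> s" "s \<le> y" "y \<le> b"
  shows "\<bar>integral {a..y} (\<lambda>t. (y - t) * g t) - integral {a..s} (\<lambda>t. (s - t) * g t)
            - (y - s) * integral {a..s} g\<bar> \<le> (y - s) * integral {s..y} (\<lambda>t. \<bar>g t\<bar>)"
proof -
  have gi: "g integrable_on {a..b}" and ai: "(\<lambda>t. \<bar>g t\<bar>) integrable_on {a..b}"
    using g by (auto simp: absolutely_integrable_on_def)
  have gs: "g integrable_on {a..s}"
    using integrable_on_subinterval[OF gi, of a s] assms by auto
  have asy: "(\<lambda>t. \<bar>g t\<bar>) integrable_on {s..y}"
    using integrable_on_subinterval[OF ai, of s y] assms by auto
  have "integral {a..s} (\<lambda>t. (s - t) * g t) + (y - s) * integral {a..s} g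
        = integral {a..s} (\<lambda>t. (s - t) * g t + (y - s) * g t)"
    using integral_add[OF integrable_on_affine_weight[OF g, of a s s]
        integrable_on_mult_right[OF gs, of "y - s"]] assms
    by (simp add: integral_mult_right)
  also have "\<dots> = integral {a..s} (\<lambda>t. (y - t) * g t)"
    by (simp add: algebra_simps)
  also have "\<dots> = integral {a..y} (\<lambda>t. (y - t) * g t) - integral {s..y} (\<lambda>t. (y - t) * g t)"
    using integral_interval_diff_real[OF integrable_on_affine_weight[OF g, of a y y], of s] assms
    by simp
  finally have "integral {a..y} (\<lambda>t. (y - t) * g t) - integral {a..s} (\<lambda>t. (s - t) * g t)
      - (y - s) * integral {a..s} g = integral {s..y} (\<lambda>t. (y - t) * g t)"
    by simp
  also have "\<bar>\<dots>\<bar> \<le> integral {s..y} (\<lambda>t. (y - s) * \<bar>g t\<bar>)"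
  proof -
    have "norm (integral {s..y} (\<lambda>t. (y - t) * g t)) \<le> integral {s..y} (\<lambda>t. (y - s) * \<bar>g t\<bar>)"
    proof (rule integral_norm_bound_integral)
      show "(\<lambda>t. (y - t) * g t) integrable_on {s..y}"
        using integrable_on_affine_weight[OF g] assms by simp
      show "(\<lambda>t. (y - s) * \<bar>g t\<bar>) integrable_on {s..y}"
        using asy by (rule integrable_on_mult_right)
      show "norm ((y - t) * g t) \<le> (y - s) * \<bar>g t\<bar>" if "t \<in> {s..y}" for t
        using that by (simp add: abs_mult mult_right_mono)
    qed
    then show ?thesis by simp
  qed
  finally show ?thesis by (simp add: integral_mult_right)
qed

lemma integral_affine_weight_remainder_bound_abs:
  fixes g :: "real \<Rightarrow> real"
  assumes g: "g absolutely_integrable_on {a..b}" and s: "s \<in> {a..b}" and y: "y \<in> {a..b}"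
  defines "F \<equiv> \<lambda>s. integral {a..s} g" and "H \<equiv> \<lambda>y. integral {a..y} (\<lambda>t. (y - t) * g t)"
    and "A \<equiv> \<lambda>s. integral {a..s} (\<lambda>t. \<bar>g t\<bar>)"
  shows "\<bar>H y - H s - (y - s) * F s\<bar> \<le> 2 * \<bar>(y - s) * (A y - A s)\<bar>"
proof -
  have gi: "g integrable_on {a..b}" and ai: "(\<lambda>t. \<bar>g t\<bar>) integrable_on {a..b}"
    using g by (auto simp: absolutely_integrable_on_def)
  show ?thesis
  proof (cases "s \<le> y")
    case True
    have "\<bar>H y - H s - (y - s) * F s\<bar> \<le> (y - s) * (A y - A s)"
      using integral_affine_weight_remainder_bound[OF g, of s y]
        integral_interval_diff_real[OF ai, of s y] s y True
      unfolding H_def F_def A_def by simp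
    then show ?thesis
      using abs_ge_self[of "(y - s) * (A y - A s)"] by linarith
  next
    case False
    have "\<bar>H s - H y - (s - y) * F y\<bar> \<le> (s - y) * (A s - A y)"
      using integral_affine_weight_remainder_bound[OF g, of y s]
        integral_interval_diff_real[OF ai, of y s] s y False
      unfolding H_def F_def A_def by simp
    moreover have "\<bar>F s - F y\<bar> \<le> A s - A y"
    proof -
      have "norm (integral {y..s} g) \<le> integral {y..s} (\<lambda>t. \<bar>g t\<bar>)"
        using integrable_on_subinterval[OF gi, of y s] integrable_on_subinterval[OF ai, of y s] s y
        by (intro integral_norm_bound_integral) auto
      then show ?thesis
        using integral_interval_diff_real[OF gi, of y s] integral_interval_diff_real[OF ai, of y s]
          s y False
        unfolding F_def A_def by simp
    qed
    then have "(s - y) * \<bar>F s - F y\<bar> \<le> (s - y) * (A s - A y)"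
      using False by (simp add: mult_left_mono)
    moreover have "H y - H s - (y - s) * F s = - (H s - H y - (s - y) * F y) + (s - y) * (F s - F y)"
      by (simp add: algebra_simps)
    moreover have "\<bar>(s - y) * (F s - F y)\<bar> = (s - y) * \<bar>F s - F y\<bar>"
      using False by (simp add: abs_mult)
    moreover have "(s - y) * (A s - A y) = (y - s) * (A y - A s)"
      by (simp add: algebra_simps)
    ultimately show ?thesis
      by (smt (verit) abs_ge_self abs_triangle_ineq)
  qed
qed

lemma has_vector_derivative_integral_affine_weight:
  fixes g :: "real \<Rightarrow> real"
  assumes g: "g absolutely_integrable_on {a..b}" and s: "s \<in> {a..b}"
  shows "((\<lambda>y. integral {a..y} (\<lambda>t. (y - t) * g t)) has_vector_derivative integral {a..s} g)
           (at s within {a..b})"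
proof -
  define F where "F s = integral {a..s} g" for s
  define H where "H y = integral {a..y} (\<lambda>t. (y - t) * g t)" for y
  define A where "A y = integral {a..y} (\<lambda>t. \<bar>g t\<bar>)" for y
  have "(A \<longlongrightarrow> A s) (at s within {a..b})"
    using indefinite_integral_continuous_1[of "\<lambda>t. \<bar>g t\<bar>"] g s
    unfolding A_def continuous_on_def by (auto simp: absolutely_integrable_on_def)
  then have lim: "((\<lambda>y. 2 * \<bar>A y - A s\<bar>) \<longlongrightarrow> 0) (at s within {a..b})"
    by (intro tendsto_mult_right_zero tendsto_rabs_zero) (simp add: LIM_zero)
  have ev: "\<forall>\<^sub>F y in at s within {a..b}. norm ((H y - H s) / (y - s) - F s) \<le> 2 * \<bar>A y - A s\<bar>"
    unfolding eventually_at_filter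
  proof (intro always_eventually allI impI)
    fix y assume "y \<noteq> s" "y \<in> {a..b}"
    then have "norm ((H y - H s) / (y - s) - F s) = \<bar>H y - H s - (y - s) * F s\<bar> / \<bar>y - s\<bar>"
      by (simp add: field_simps abs_divide)
    also have "\<dots> \<le> 2 * \<bar>(y - s) * (A y - A s)\<bar> / \<bar>y - s\<bar>"
      using integral_affine_weight_remainder_bound_abs[OF g s \<open>y \<in> {a..b}\<close>]
      by (simp add: H_def F_def A_def divide_right_mono)
    also have "\<dots> = 2 * \<bar>A y - A s\<bar>"
      using \<open>y \<noteq> s\<close> by (simp add: abs_mult)
    finally show "norm ((H y - H s) / (y - s) - F s) \<le> 2 * \<bar>A y - A s\<bar>" .
  qed
  have "((\<lambda>y. (H y - H s) / (y - s) - F s) \<longlongrightarrow> 0) (at s within {a..b})"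
    by (rule Lim_null_comparison[OF ev lim])
  then show ?thesis
    by (simp add: H_def[abs_def] F_def has_field_derivative_iff LIM_zero_iff
        has_real_derivative_iff_has_vector_derivative[symmetric])
qed

(* Cauchy's formula for repeated integration.  Since g is only absolutely integrable, the
   iterated integral is differentiated through the remainder estimate, not by the product rule. *)
lemma has_integral_indefinite_integral_real:
  fixes g :: "real \<Rightarrow> real"
  assumes "g absolutely_integrable_on {a..b}" and "a \<le> b"
  shows "((\<lambda>s. integral {a..s} g) has_integral integral {a..b} (\<lambda>t. (b - t) * g t)) {a..b}"
  using fundamental_theorem_of_calculus[OF assms(2) has_vector_derivative_integral_affine_weight[OF assms(1)]]
  by simp

definition admissible_path ::
    "real \<Rightarrow> real \<Rightarrow> real \<Rightarrow> real \<Rightarrow> real \<Rightarrow> (real \<Rightarrow> real) \<Rightarrow> (real \<Rightarrow> real) \<Rightarrow> bool" where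
  "admissible_path q x v \<theta> w \<eta> g \<longleftrightarrow>
     sobolev_W1q q \<theta> \<eta> g \<and> \<eta> 0 = v \<and> \<eta> \<theta> = w \<and> (\<forall>s\<in>{0..\<theta>}. w \<le> \<eta> s) \<and>
     x + integral {0..\<theta>} \<eta> \<le> 0"

definition path_cost :: "real \<Rightarrow> real \<Rightarrow> (real \<Rightarrow> real) \<Rightarrow> real" where
  "path_cost q \<theta> g = 1 / q * integral {0..\<theta>} (\<lambda>s. \<bar>g s\<bar> powr q)"

lemma I_cost_le_path_cost:
  "admissible_path q x v \<theta> w \<eta> g \<Longrightarrow> I_cost q x v \<theta> w \<le> ereal (path_cost q \<theta> g)"
  unfolding I_cost_def by (rule INF_lower2[of "(\<eta>, g)"]) (auto simp: admissible_path_def path_cost_def)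

lemma I_cost_greatest:
  "(\<And>\<eta> g. admissible_path q x v \<theta> w \<eta> g \<Longrightarrow> c \<le> path_cost q \<theta> g) \<Longrightarrow> ereal c \<le> I_cost q x v \<theta> w"
  unfolding I_cost_def by (rule INF_greatest) (auto simp: admissible_path_def path_cost_def)

lemma sobolev_W1q_continuous_on:
  assumes "sobolev_W1q q \<theta> \<eta> g"
  shows "continuous_on {0..\<theta>} \<eta>"
proof -
  have "g absolutely_integrable_on {0..\<theta>}"
    and \<eta>: "\<And>t. t \<in> {0..\<theta>} \<Longrightarrow> \<eta> t = \<eta> 0 + integral {0..t} g"
    using assms unfolding sobolev_W1q_def by blast+
  then have "continuous_on {0..\<theta>} (\<lambda>t. \<eta> 0 + integral {0..t} g)"
    by (intro continuous_on_add continuous_on_const indefinite_integral_continuous_1)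
       (simp add: absolutely_integrable_on_def)
  then show ?thesis
    by (rule continuous_on_eq) (rule \<eta>[symmetric])
qed

lemma sobolev_W1q_integral_affine_weight:
  assumes sob: "sobolev_W1q q \<theta> \<eta> g" and "0 \<le> b" "b \<le> \<theta>"
  shows "integral {0..b} (\<lambda>t. (a - t) * g t) = (a - b) * (\<eta> b - \<eta> 0) + integral {0..b} \<eta> - b * \<eta> 0"
proof -
  have "g absolutely_integrable_on {0..\<theta>}"
    and \<eta>\<theta>: "\<And>t. t \<in> {0..\<theta>} \<Longrightarrow> \<eta> t = \<eta> 0 + integral {0..t} g"
    using sob unfolding sobolev_W1q_def by blast+
  then have g: "g absolutely_integrable_on {0..b}"
    using absolutely_integrable_on_subinterval assms by fastforce
  then have gi: "g integrable_on {0..b}" by (simp add: absolutely_integrable_on_def)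
  have \<eta>: "\<eta> t = \<eta> 0 + integral {0..t} g" if "t \<in> {0..b}" for t
    by (rule \<eta>\<theta>) (use that assms in auto)
  have "((\<lambda>t. \<eta> 0 + integral {0..t} g) has_integral
        b * \<eta> 0 + integral {0..b} (\<lambda>t. (b - t) * g t)) {0..b}"
    using has_integral_add[OF has_integral_const_real[of "\<eta> 0" 0 b]
        has_integral_indefinite_integral_real[OF g \<open>0 \<le> b\<close>]] \<open>0 \<le> b\<close>
    by (simp add: mult.commute)
  then have "(\<eta> has_integral b * \<eta> 0 + integral {0..b} (\<lambda>t. (b - t) * g t)) {0..b}"
    using has_integral_cong[of "{0..b}" \<eta>, OF \<eta>] by blast
  then have "integral {0..b} \<eta> = b * \<eta> 0 + integral {0..b} (\<lambda>t. (b - t) * g t)"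
    by (rule integral_unique)
  moreover have "integral {0..b} (\<lambda>t. (a - t) * g t)
      = (a - b) * integral {0..b} g + integral {0..b} (\<lambda>t. (b - t) * g t)"
  proof -
    have "integral {0..b} (\<lambda>t. (a - t) * g t) = integral {0..b} (\<lambda>t. (a - b) * g t + (b - t) * g t)"
      by (simp add: algebra_simps)
    also have "\<dots> = (a - b) * integral {0..b} g + integral {0..b} (\<lambda>t. (b - t) * g t)"
      using integral_add[OF integrable_on_mult_right[OF gi, of "a - b"]
          integrable_on_affine_weight[OF g, of 0 b b]]
      by simp
    finally show ?thesis .
  qed
  moreover have "\<eta> b - \<eta> 0 = integral {0..b} g"
    using \<eta>[of b] \<open>0 \<le> b\<close> by simp
  ultimately show ?thesis by simp
qed

lemma admissible_path_mass_bound: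
  assumes adm: "admissible_path q x v \<theta> w \<eta> g" and "0 \<le> w" "0 < a" "0 < \<theta>"
  shows "a * (v - w) + x \<le> - integral {0..min a \<theta>} (\<lambda>t. (a - t) * g t)"
proof -
  have sob: "sobolev_W1q q \<theta> \<eta> g" and v: "\<eta> 0 = v" and w: "\<eta> \<theta> = w"
    and above: "\<And>s. s \<in> {0..\<theta>} \<Longrightarrow> w \<le> \<eta> s" and mass: "x + integral {0..\<theta>} \<eta> \<le> 0"
    using adm by (auto simp: admissible_path_def)
  have \<eta>int: "\<eta> integrable_on {0..\<theta>}"
    by (rule integrable_continuous_real[OF sobolev_W1q_continuous_on[OF sob]])
  show ?thesis
  proof (cases "a \<le> \<theta>")
    case True
    have "integral {0..a} \<eta> \<le> integral {0..\<theta>} \<eta>"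
    proof (rule integral_subset_le)
      show "\<eta> integrable_on {0..a}"
        using integrable_on_subinterval[OF \<eta>int, of 0 a] True by simp
      show "\<forall>s\<in>{0..\<theta>}. 0 \<le> \<eta> s"
        using above \<open>0 \<le> w\<close> by (meson order_trans)
    qed (use True \<eta>int in auto)
    then show ?thesis
      using sobolev_W1q_integral_affine_weight[OF sob, of a a] True \<open>0 < a\<close> v mass
        mult_nonneg_nonneg[OF less_imp_le[OF \<open>0 < a\<close>] \<open>0 \<le> w\<close>]
      by (simp add: algebra_simps)
  next
    case False
    then show ?thesis
      using sobolev_W1q_integral_affine_weight[OF sob, of \<theta> a] \<open>0 < \<theta>\<close> v w mass
        mult_nonneg_nonneg[OF less_imp_le[OF \<open>0 < \<theta>\<close>] \<open>0 \<le> w\<close>]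
      by (simp add: algebra_simps)
  qed
qed

lemma has_real_derivative_diff_powr:
  fixes a r :: real
  assumes "t < a"
  shows "((\<lambda>t. (a - t) powr r) has_real_derivative - (r * (a - t) powr (r - 1))) (at t)"
proof -
  have "((\<lambda>t. (a - t) powr r) has_real_derivative r * (a - t) powr (r - of_nat 1) * (- 1)) (at t)"
    using assms by (intro DERIV_fun_powr derivative_eq_intros) auto
  then show ?thesis by simp
qed

lemma has_integral_diff_powr:
  fixes a b r :: real
  assumes "0 < r" "0 \<le> b" "b \<le> a"
  shows "((\<lambda>t. (a - t) powr r) has_integral (a powr (r + 1) - (a - b) powr (r + 1)) / (r + 1)) {0..b}"
proof -
  have "((\<lambda>t. (a - t) powr r) has_integral
      (\<lambda>t. - ((a - t) powr (r + 1)) / (r + 1)) b - (\<lambda>t. - ((a - t) powr (r + 1)) / (r + 1)) 0) {0..b}"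
  proof (rule fundamental_theorem_of_calculus_interior[OF \<open>0 \<le> b\<close>])
    show "continuous_on {0..b} (\<lambda>t. - ((a - t) powr (r + 1)) / (r + 1))"
      using assms by (intro continuous_intros continuous_on_powr') auto
    fix t assume "t \<in> {0<..<b}"
    then have "((\<lambda>t. - ((a - t) powr (r + 1)) / (r + 1)) has_real_derivative
        - (- ((r + 1) * (a - t) powr (r + 1 - 1))) / (r + 1)) (at t)"
      using assms by (intro DERIV_cdivide DERIV_minus has_real_derivative_diff_powr) auto
    then show "((\<lambda>t. - ((a - t) powr (r + 1)) / (r + 1)) has_vector_derivative (a - t) powr r) (at t)"
      using assms by (simp add: has_real_derivative_iff_has_vector_derivative[symmetric])
  qed
  then show ?thesis by (simp add: diff_divide_distrib)
qed

lemma integral_scaled_diff_powr_le: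
  fixes a b r \<mu> :: real
  assumes "0 < r" "0 \<le> \<mu>" "0 \<le> b" "b \<le> a"
  shows "(\<lambda>t. (\<mu> * (a - t)) powr r) integrable_on {0..b}"
    and "integral {0..b} (\<lambda>t. (\<mu> * (a - t)) powr r) \<le> \<mu> powr r * a powr (r + 1) / (r + 1)"
proof -
  have "((\<lambda>t. (\<mu> * (a - t)) powr r) has_integral
      \<mu> powr r * ((a powr (r + 1) - (a - b) powr (r + 1)) / (r + 1))) {0..b}"
    using has_integral_mult_right[OF has_integral_diff_powr[of r b a], of "\<mu> powr r"] assms
    by (subst has_integral_cong[where g="\<lambda>t. \<mu> powr r * (a - t) powr r"]) (auto simp: powr_mult)
  moreover have "\<mu> powr r * ((a powr (r + 1) - (a - b) powr (r + 1)) / (r + 1))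
      \<le> \<mu> powr r * a powr (r + 1) / (r + 1)"
    using assms by (simp add: mult_left_mono divide_right_mono)
  ultimately show "(\<lambda>t. (\<mu> * (a - t)) powr r) integrable_on {0..b}"
    and "integral {0..b} (\<lambda>t. (\<mu> * (a - t)) powr r) \<le> \<mu> powr r * a powr (r + 1) / (r + 1)"
    by (auto simp: has_integral_iff)
qed

lemma young_integral_affine_weight:
  fixes g :: "real \<Rightarrow> real"
  assumes pq: "1 < p" "1 < q" "1 / p + 1 / q = 1"
    and "0 \<le> \<mu>" "0 \<le> b" "b \<le> a" "b \<le> \<theta>"
    and g: "g absolutely_integrable_on {0..\<theta>}" and gq: "(\<lambda>s. \<bar>g s\<bar> powr q) integrable_on {0..\<theta>}"
  shows "- \<mu> * integral {0..b} (\<lambda>t. (a - t) * g t)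
           \<le> \<mu> powr p * a powr (p + 1) / (p * (p + 1)) + integral {0..\<theta>} (\<lambda>s. \<bar>g s\<bar> powr q) / q"
proof -
  note weight = integral_scaled_diff_powr_le[of p \<mu> b a]
  have gqb: "(\<lambda>s. \<bar>g s\<bar> powr q) integrable_on {0..b}"
    using integrable_on_subinterval[OF gq, of 0 b] assms by auto
  have "- \<mu> * integral {0..b} (\<lambda>t. (a - t) * g t) = integral {0..b} (\<lambda>t. (\<mu> * (a - t)) * - g t)"
    by (simp add: integral_mult_right[symmetric] algebra_simps)
  also have "\<dots> \<le> integral {0..b} (\<lambda>t. (\<mu> * (a - t)) powr p / p + \<bar>g t\<bar> powr q / q)"
  proof (rule integral_le)
    show "(\<lambda>t. \<mu> * (a - t) * - g t) integrable_on {0..b}"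
      using integrable_on_mult_right[OF integrable_on_affine_weight[OF g, of 0 b a], of "- \<mu>"] assms
      by (simp add: algebra_simps)
    show "(\<lambda>t. (\<mu> * (a - t)) powr p / p + \<bar>g t\<bar> powr q / q) integrable_on {0..b}"
      using weight(1) gqb assms pq by (intro integrable_add integrable_on_divide) auto
    fix t assume "t \<in> {0..b}"
    then have "0 \<le> \<mu> * (a - t)" using assms by auto
    then have "\<mu> * (a - t) * - g t \<le> \<mu> * (a - t) * \<bar>g t\<bar>"
      by (intro mult_left_mono) auto
    also have "\<dots> \<le> (\<mu> * (a - t)) powr p / p + \<bar>g t\<bar> powr q / q"
      using Youngs_inequality[OF pq \<open>0 \<le> \<mu> * (a - t)\<close>] by simp
    finally show "\<mu> * (a - t) * - g t \<le> (\<mu> * (a - t)) powr p / p + \<bar>g t\<bar> powr q / q" .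
  qed
  also have "\<dots> = integral {0..b} (\<lambda>t. (\<mu> * (a - t)) powr p) / p + integral {0..b} (\<lambda>t. \<bar>g t\<bar> powr q) / q"
    using weight(1) gqb assms pq by (simp add: integral_add integrable_on_divide integral_divide)
  also have "\<dots> \<le> \<mu> powr p * a powr (p + 1) / (p * (p + 1)) + integral {0..\<theta>} (\<lambda>s. \<bar>g s\<bar> powr q) / q"
  proof (intro add_mono divide_right_mono)
    have "integral {0..b} (\<lambda>t. (\<mu> * (a - t)) powr p) / p \<le> \<mu> powr p * a powr (p + 1) / (p + 1) / p"
      using weight(2) assms pq by (intro divide_right_mono) auto
    then show "integral {0..b} (\<lambda>t. (\<mu> * (a - t)) powr p) / p \<le> \<mu> powr p * a powr (p + 1) / (p * (p + 1))"
      by (simp add: mult.commute)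
    show "integral {0..b} (\<lambda>t. \<bar>g t\<bar> powr q) \<le> integral {0..\<theta>} (\<lambda>s. \<bar>g s\<bar> powr q)"
      using gq gqb assms by (intro integral_subset_le) auto
  qed (use pq in auto)
  finally show ?thesis .
qed

lemma powr_conjugate_maximiser:
  fixes p q A B :: real
  assumes pq: "1 < p" "1 < q" "1 / p + 1 / q = 1" and "0 \<le> A" "0 < B"
  shows "(A / B) powr (q - 1) * A - ((A / B) powr (q - 1)) powr p * B / p
           = A powr q / (q * B powr (q - 1))"
proof -
  have qp: "(q - 1) * p = q" and p_inv: "1 - 1 / p = 1 / q"
    using pq by (auto simp: field_simps)
  have Bq: "B powr q = B powr (q - 1) * B"
    using powr_add[of B "q - 1" 1] \<open>0 < B\<close> by simp
  have "((A / B) powr (q - 1)) powr p = A powr q / B powr q"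
    using assms by (simp add: powr_powr qp powr_divide)
  moreover have "(A / B) powr (q - 1) * A = A powr q / B powr (q - 1)"
  proof (cases "A = 0")
    case False
    then have "A powr (q - 1) * A = A powr q"
      using powr_add[of A "q - 1" 1] \<open>0 \<le> A\<close> by simp
    then show ?thesis
      using assms by (simp add: powr_divide)
  qed simp
  ultimately have "(A / B) powr (q - 1) * A - ((A / B) powr (q - 1)) powr p * B / p
      = A powr q / B powr (q - 1) * (1 - 1 / p)"
    using \<open>0 < B\<close> by (simp add: Bq field_simps)
  then show ?thesis
    by (simp add: p_inv)
qed

lemma dual_bound_closed_form:
  fixes p q V X :: real
  assumes pq: "1 < p" "1 < q" "1 / p + 1 / q = 1" and V: "0 < V" and X: "0 < X"
  shows "(p * X) powr q / (q * (((p + 1) * X / V) powr (p + 1) / (p + 1)) powr (q - 1))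
           = 1 / q * (p / (p + 1)) powr q * (V powr (2 * q - 1) / X powr (q - 1))"
proof -
  define a where "a = (p + 1) * X / V"
  have "0 < a"
    using pq V X by (simp add: a_def)
  have "(p + 1) * (q - 1) = 2 * q - 1"
    using pq by (simp add: field_simps)
  then have "(a powr (p + 1) / (p + 1)) powr (q - 1) = a powr (2 * q - 1) / (p + 1) powr (q - 1)"
    using \<open>0 < a\<close> pq by (simp add: powr_divide powr_powr)
  moreover have "a powr (2 * q - 1)
      = (p + 1) powr q * (p + 1) powr (q - 1) * (X powr q * X powr (q - 1)) / V powr (2 * q - 1)"
  proof -
    have "2 * q - 1 = q + (q - 1)" by simp
    then have "c powr (2 * q - 1) = c powr q * c powr (q - 1)" for c :: real
      by (simp only: powr_add)
    then show ?thesis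
      unfolding a_def using pq V X by (simp add: powr_divide powr_mult)
  qed
  ultimately have "(a powr (p + 1) / (p + 1)) powr (q - 1)
      = (p + 1) powr q * (X powr q * X powr (q - 1)) / V powr (2 * q - 1)"
    using pq by simp
  then show ?thesis
    using pq V X unfolding a_def by (simp add: powr_mult powr_divide)
qed

lemma path_cost_lower_bound:
  fixes p q :: real
  assumes pq: "1 < p" "1 < q" "1 / p + 1 / q = 1"
    and adm: "admissible_path q x v \<theta> w \<eta> g" and "0 < \<theta>" "0 \<le> w" "w < v" "x < 0"
  shows "1 / q * (p / (p + 1)) powr q * ((v - w) powr (2 * q - 1) / \<bar>x\<bar> powr (q - 1))
           \<le> path_cost q \<theta> g"
proof -
  define V X where "V = v - w" and "X = - x"
  have V: "0 < V" and X: "0 < X"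
    using assms by (auto simp: V_def X_def)
  \<comment> \<open>\<open>a\<close> and \<open>\<mu>\<close> maximise the dual bound\<close>
  define a where "a = (p + 1) * X / V"
  define B where "B = a powr (p + 1) / (p + 1)"
  define \<mu> where "\<mu> = (p * X / B) powr (q - 1)"
  have a: "0 < a" and B: "0 < B"
    using pq V X by (auto simp: a_def B_def)
  have "\<mu> * (a * V + x) \<le> - \<mu> * integral {0..min a \<theta>} (\<lambda>t. (a - t) * g t)"
    using mult_left_mono[OF admissible_path_mass_bound[OF adm \<open>0 \<le> w\<close> a \<open>0 < \<theta>\<close>]]
    by (simp add: \<mu>_def V_def)
  also have "\<dots> \<le> \<mu> powr p * a powr (p + 1) / (p * (p + 1)) + path_cost q \<theta> g"
    using young_integral_affine_weight[OF pq, of \<mu> "min a \<theta>" a \<theta> g] adm a \<open>0 < \<theta>\<close>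
    by (simp add: admissible_path_def sobolev_W1q_def path_cost_def \<mu>_def)
  finally have "\<mu> * (p * X) - \<mu> powr p * B / p \<le> path_cost q \<theta> g"
    using V by (simp add: a_def B_def X_def field_simps)
  moreover have "\<mu> * (p * X) - \<mu> powr p * B / p = (p * X) powr q / (q * B powr (q - 1))"
    unfolding \<mu>_def using powr_conjugate_maximiser[OF pq, of "p * X" B] pq X B by simp
  ultimately show ?thesis
    using dual_bound_closed_form[OF pq V X] \<open>x < 0\<close>
    by (simp add: B_def a_def V_def X_def abs_of_neg)
qed

lemma power_profile_sobolev_W1q:
  fixes c p q \<theta> w :: real
  assumes "1 < p" "0 < q"
  shows "sobolev_W1q q \<theta> (\<lambda>s. w + c * (\<theta> - s) powr p) (\<lambda>s. - (c * (p * (\<theta> - s) powr (p - 1))))"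
  unfolding sobolev_W1q_def
proof (intro conjI ballI)
  define \<eta> where "\<eta> s = w + c * (\<theta> - s) powr p" for s
  define g where "g s = - (c * (p * (\<theta> - s) powr (p - 1)))" for s
  have g_cont: "continuous_on {0..\<theta>} g"
    unfolding g_def using assms by (intro continuous_intros continuous_on_powr') auto
  show "g absolutely_integrable_on {0..\<theta>}"
    by (rule absolutely_integrable_continuous_real[OF g_cont])
  show "(\<lambda>s. \<bar>g s\<bar> powr q) integrable_on {0..\<theta>}"
    using g_cont assms by (intro integrable_continuous_real continuous_on_powr' continuous_intros) auto
  fix t assume t: "t \<in> {0..\<theta>}"
  have "(g has_integral \<eta> t - \<eta> 0) {0..t}"
  proof (rule fundamental_theorem_of_calculus_interior)
    show "continuous_on {0..t} \<eta>"
      unfolding \<eta>_def using assms t by (intro continuous_intros continuous_on_powr') auto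
    fix s assume "s \<in> {0<..<t}"
    then have "(\<eta> has_real_derivative c * - (p * (\<theta> - s) powr (p - 1))) (at s)"
      unfolding \<eta>_def using t by (intro DERIV_add_const DERIV_cmult has_real_derivative_diff_powr) auto
    then show "(\<eta> has_vector_derivative g s) (at s)"
      by (simp add: g_def has_real_derivative_iff_has_vector_derivative[symmetric])
  qed (use t in auto)
  then show "\<eta> t = \<eta> 0 + integral {0..t} g"
    by (simp add: has_integral_iff)
qed

lemma power_profile_integrals:
  fixes c p q \<theta> w :: real
  assumes pq: "1 < p" "1 < q" "1 / p + 1 / q = 1" and "0 \<le> c" "0 < \<theta>"
  shows "integral {0..\<theta>} (\<lambda>s. w + c * (\<theta> - s) powr p) = \<theta> * w + c * \<theta> powr (p + 1) / (p + 1)"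
    and "integral {0..\<theta>} (\<lambda>s. \<bar>- (c * (p * (\<theta> - s) powr (p - 1)))\<bar> powr q)
           = (c * p) powr q * \<theta> powr (p + 1) / (p + 1)"
proof -
  have int_powr: "((\<lambda>s. (\<theta> - s) powr r) has_integral \<theta> powr (r + 1) / (r + 1)) {0..\<theta>}" if "0 < r" for r
    using has_integral_diff_powr[of r \<theta> \<theta>] that \<open>0 < \<theta>\<close> by simp
  have "((\<lambda>s. w) has_integral \<theta> * w) {0..\<theta>}"
    using has_integral_const_real[of w 0 \<theta>] \<open>0 < \<theta>\<close> by simp
  then have "((\<lambda>s. w + c * (\<theta> - s) powr p) has_integral \<theta> * w + c * (\<theta> powr (p + 1) / (p + 1))) {0..\<theta>}"
    using pq by (intro has_integral_add has_integral_mult_right int_powr) auto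
  then show "integral {0..\<theta>} (\<lambda>s. w + c * (\<theta> - s) powr p) = \<theta> * w + c * \<theta> powr (p + 1) / (p + 1)"
    by (simp add: has_integral_iff)
  have "(p - 1) * q = p"
    using pq by (simp add: field_simps)
  then have "\<bar>- (c * (p * (\<theta> - s) powr (p - 1)))\<bar> powr q = (c * p) powr q * (\<theta> - s) powr p"
    if "s \<le> \<theta>" for s
    using that pq \<open>0 \<le> c\<close> by (simp add: abs_mult powr_mult powr_powr mult.assoc)
  then have "integral {0..\<theta>} (\<lambda>s. \<bar>- (c * (p * (\<theta> - s) powr (p - 1)))\<bar> powr q)
      = integral {0..\<theta>} (\<lambda>s. (c * p) powr q * (\<theta> - s) powr p)"
    by (intro integral_cong) auto
  also have "\<dots> = (c * p) powr q * \<theta> powr (p + 1) / (p + 1)"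
    using int_powr[of p] pq by (simp add: has_integral_iff)
  finally show "integral {0..\<theta>} (\<lambda>s. \<bar>- (c * (p * (\<theta> - s) powr (p - 1)))\<bar> powr q)
      = (c * p) powr q * \<theta> powr (p + 1) / (p + 1)" .
qed

lemma power_profile_admissible_cost:
  fixes p q V \<theta> w x :: real
  assumes pq: "1 < p" "1 < q" "1 / p + 1 / q = 1"
    and "0 < \<theta>" "0 \<le> V" and mass: "x + \<theta> * (w + V / (p + 1)) \<le> 0"
  defines "c \<equiv> V / \<theta> powr p"
  shows "admissible_path q x (w + V) \<theta> w
           (\<lambda>s. w + c * (\<theta> - s) powr p) (\<lambda>s. - (c * (p * (\<theta> - s) powr (p - 1))))"
    and "path_cost q \<theta> (\<lambda>s. - (c * (p * (\<theta> - s) powr (p - 1))))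
           = (V * p) powr q / (q * (p + 1) * \<theta> powr (q - 1))"
proof -
  have c: "0 \<le> c" and c\<theta>: "c * \<theta> powr p = V"
    using assms by (auto simp: c_def)
  note integrals = power_profile_integrals[OF pq c \<open>0 < \<theta>\<close>]
  have "c * \<theta> powr (p + 1) = \<theta> * V"
    using c\<theta> \<open>0 < \<theta>\<close> by (simp add: powr_add mult.commute mult.left_commute)
  then have "x + integral {0..\<theta>} (\<lambda>s. w + c * (\<theta> - s) powr p) \<le> 0"
    using mass integrals(1) by (simp add: algebra_simps)
  then show "admissible_path q x (w + V) \<theta> w
      (\<lambda>s. w + c * (\<theta> - s) powr p) (\<lambda>s. - (c * (p * (\<theta> - s) powr (p - 1))))"
    using power_profile_sobolev_W1q[of p q \<theta> w c] c\<theta> \<open>0 < \<theta>\<close> c pq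
    unfolding admissible_path_def by auto
  have "(c * p) powr q = (V * p) powr q / \<theta> powr (p + q)"
    using pq c \<open>0 \<le> V\<close> \<open>0 < \<theta>\<close> by (simp add: c_def powr_mult powr_divide powr_powr field_simps)
  moreover have "\<theta> powr (p + q) = \<theta> powr (p + 1) * \<theta> powr (q - 1)"
    by (simp add: powr_add[symmetric])
  ultimately show "path_cost q \<theta> (\<lambda>s. - (c * (p * (\<theta> - s) powr (p - 1))))
      = (V * p) powr q / (q * (p + 1) * \<theta> powr (q - 1))"
    using integrals(2) \<open>0 < \<theta>\<close> by (simp add: path_cost_def)
qed

lemma J_cost_lower_bound:
  fixes p q :: real
  assumes pq: "1 < p" "1 < q" "1 / p + 1 / q = 1" and "0 \<le> w" "w < v" "x < 0"
  shows "ereal (1 / q * (p / (p + 1)) powr q * ((v - w) powr (2 * q - 1) / \<bar>x\<bar> powr (q - 1)))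
           \<le> J_cost q T x v w"
  unfolding J_cost_def
proof (rule INF_greatest)
  fix \<theta> assume "\<theta> \<in> {0<..T}"
  then show "ereal (1 / q * (p / (p + 1)) powr q * ((v - w) powr (2 * q - 1) / \<bar>x\<bar> powr (q - 1)))
      \<le> I_cost q x v \<theta> w"
    using path_cost_lower_bound[OF pq _ _ assms(4-6)] by (intro I_cost_greatest) auto
qed

lemma J_cost_upper_bound:
  fixes p q :: real
  assumes pq: "1 < p" "1 < q" "1 / p + 1 / q = 1" and "0 \<le> w" "w < v" "x < 0"
    and T: "(p + 1) * \<bar>x\<bar> / (v + p * w) \<le> T"
  shows "J_cost q T x v w
           \<le> ereal (1 / q * (p / (p + 1)) powr q
                     * ((v - w) powr q * (v + p * w) powr (q - 1) / \<bar>x\<bar> powr (q - 1)))"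
proof -
  define \<theta> where "\<theta> = (p + 1) * \<bar>x\<bar> / (v + p * w)"
  have S: "0 < v + p * w"
    using assms by (intro add_pos_nonneg) auto
  have \<theta>: "0 < \<theta>"
    unfolding \<theta>_def using pq S \<open>x < 0\<close> by (intro divide_pos_pos mult_pos_pos) auto
  have mass: "x + \<theta> * (w + (v - w) / (p + 1)) \<le> 0"
  proof -
    have "w + (v - w) / (p + 1) = (v + p * w) / (p + 1)"
      using pq by (simp add: field_simps)
    then have "\<theta> * (w + (v - w) / (p + 1)) = \<bar>x\<bar>"
      using pq S by (simp add: \<theta>_def)
    then show ?thesis using \<open>x < 0\<close> by simp
  qed
  note profile = power_profile_admissible_cost[OF pq \<theta> _ mass]
  have "J_cost q T x v w \<le> I_cost q x v \<theta> w"
    unfolding J_cost_def using \<theta> T by (intro INF_lower) (simp add: \<theta>_def)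
  also have "\<dots> \<le> ereal (((v - w) * p) powr q / (q * (p + 1) * \<theta> powr (q - 1)))"
    using I_cost_le_path_cost[OF profile(1)] profile(2) \<open>w < v\<close> by simp
  also have "((v - w) * p) powr q / (q * (p + 1) * \<theta> powr (q - 1))
      = 1 / q * (p / (p + 1)) powr q * ((v - w) powr q * (v + p * w) powr (q - 1) / \<bar>x\<bar> powr (q - 1))"
  proof -
    have field: "A * P / (q * (p + 1) * (Q * X / S)) = 1 / q * (P / ((p + 1) * Q)) * (A * S / X)"
      if "Q \<noteq> 0" "X \<noteq> 0" "S \<noteq> 0" for A P Q X S :: real
      using that pq by (simp add: field_simps)
    have "(p / (p + 1)) powr q = p powr q / ((p + 1) * (p + 1) powr (q - 1))"
      using powr_add[of "p + 1" 1 "q - 1"] pq by (simp add: powr_divide)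
    moreover have "\<theta> powr (q - 1) = (p + 1) powr (q - 1) * \<bar>x\<bar> powr (q - 1) / (v + p * w) powr (q - 1)"
      using pq S by (simp add: \<theta>_def powr_divide powr_mult)
    moreover have "((v - w) * p) powr q = (v - w) powr q * p powr q"
      using \<open>w < v\<close> pq by (simp add: powr_mult)
    ultimately show ?thesis
      using field[of "(p + 1) powr (q - 1)" "\<bar>x\<bar> powr (q - 1)" "(v + p * w) powr (q - 1)"]
        \<open>x < 0\<close> S pq by simp
  qed
  finally show ?thesis .
qed

lemma conjugate_exponent_constant:
  fixes q :: real
  assumes "1 < q"
  shows "1 / q * ((q / (q - 1)) / (q / (q - 1) + 1)) powr q = q powr (q - 1) / (2 * q - 1) powr q"
proof -
  have "q / (q - 1) + 1 = (2 * q - 1) / (q - 1)"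
    using assms by (simp add: field_simps)
  then have "(q / (q - 1)) / (q / (q - 1) + 1) = q / (2 * q - 1)"
    using assms by simp
  then show ?thesis
    using assms by (simp add: powr_divide powr_diff)
qed

lemma eventually_profile_duration_le:
  fixes p T :: real and x v w :: "nat \<Rightarrow> real"
  assumes "0 \<le> p" "0 < T" and v: "\<And>i. 0 < v i" and w: "\<And>i. 0 \<le> w i"
    and xv: "(\<lambda>i. \<bar>x i\<bar> / v i) \<longlonglongrightarrow> 0" and wv: "(\<lambda>i. w i / v i) \<longlonglongrightarrow> 0"
  shows "\<forall>\<^sub>F i in sequentially. w i < v i \<and> (p + 1) * \<bar>x i\<bar> / (v i + p * w i) \<le> T"
proof -
  have "0 < T / (p + 1)"
    using assms by simp
  then have "\<forall>\<^sub>F i in sequentially. \<bar>x i\<bar> / v i < T / (p + 1)"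
    by (rule order_tendstoD(2)[OF xv])
  with order_tendstoD(2)[OF wv zero_less_one] show ?thesis
  proof eventually_elim
    case (elim i)
    have "v i \<le> v i + p * w i"
      using \<open>0 \<le> p\<close> w[of i] by simp
    then have "(p + 1) * \<bar>x i\<bar> / (v i + p * w i) \<le> (p + 1) * \<bar>x i\<bar> / v i"
      using \<open>0 \<le> p\<close> v[of i] by (intro divide_left_mono mult_pos_pos) auto
    also have "\<dots> \<le> T"
      using elim(2) \<open>0 \<le> p\<close> v[of i] by (simp add: field_simps)
    finally show ?case
      using elim(1) v[of i] by simp
  qed
qed

lemma asymp_equiv_mult_tendsto_one:
  fixes M r :: "nat \<Rightarrow> real"
  assumes "r \<longlonglongrightarrow> 1"
  shows "(\<lambda>i. M i * r i) \<sim>[sequentially] M"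
  using asymp_equiv_mult[OF asymp_equiv_refl tendsto_imp_asymp_equiv_const[OF assms]] by simp

lemma asymp_equiv_between_power_bounds:
  fixes p q K :: real and f v w X :: "nat \<Rightarrow> real"
  assumes "0 \<le> p" and v: "\<And>i. 0 < v i" and w: "\<And>i. 0 \<le> w i" "\<And>i. w i \<le> v i"
    and wv: "(\<lambda>i. w i / v i) \<longlonglongrightarrow> 0"
    and bounds: "\<forall>\<^sub>F i in sequentially.
        K * ((v i - w i) powr (2 * q - 1) / X i) \<le> f i \<and>
        f i \<le> K * ((v i - w i) powr q * (v i + p * w i) powr (q - 1) / X i)"
  shows "f \<sim>[sequentially] (\<lambda>i. K * (v i powr (2 * q - 1) / X i))"
proof (rule asymp_equiv_sandwich_real)
  let ?M = "\<lambda>i. K * (v i powr (2 * q - 1) / X i)"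
  define r where "r i = w i / v i" for i
  have r0: "r \<longlonglongrightarrow> 0"
    using wv by (simp add: r_def[abs_def])
  have r: "0 \<le> r i" "r i \<le> 1" for i
    using v[of i] w[of i] by (auto simp: r_def)
  have lower: "K * ((v i - w i) powr (2 * q - 1) / X i) = ?M i * (1 - r i) powr (2 * q - 1)" for i
  proof -
    have "v i - w i = v i * (1 - r i)"
      using v[of i] by (simp add: r_def field_simps)
    then show ?thesis
      using v[of i] r[of i] by (simp add: powr_mult)
  qed
  have upper: "K * ((v i - w i) powr q * (v i + p * w i) powr (q - 1) / X i)
      = ?M i * ((1 - r i) powr q * (1 + p * r i) powr (q - 1))" for i
  proof -
    have "v i - w i = v i * (1 - r i)" "v i + p * w i = v i * (1 + p * r i)"
      using v[of i] by (simp_all add: r_def field_simps)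
    moreover have "v i powr (2 * q - 1) = v i powr q * v i powr (q - 1)"
      using powr_add[of "v i" q "q - 1"] by simp
    ultimately show ?thesis
      using v[of i] r[of i] \<open>0 \<le> p\<close> by (simp add: powr_mult)
  qed
  have "(\<lambda>i. (1 - r i) powr (2 * q - 1)) \<longlonglongrightarrow> (1 - 0) powr (2 * q - 1)"
    by (intro tendsto_powr tendsto_diff tendsto_const r0) auto
  then show "(\<lambda>i. K * ((v i - w i) powr (2 * q - 1) / X i)) \<sim>[sequentially] ?M"
    unfolding lower by (intro asymp_equiv_mult_tendsto_one) simp
  have "(\<lambda>i. (1 - r i) powr q * (1 + p * r i) powr (q - 1))
      \<longlonglongrightarrow> (1 - 0) powr q * (1 + p * 0) powr (q - 1)"
    by (intro tendsto_mult tendsto_powr tendsto_diff tendsto_add tendsto_const r0) auto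
  then show "(\<lambda>i. K * ((v i - w i) powr q * (v i + p * w i) powr (q - 1) / X i)) \<sim>[sequentially] ?M"
    unfolding upper by (intro asymp_equiv_mult_tendsto_one) simp
  show "\<forall>\<^sub>F i in sequentially. f i \<in> {K * ((v i - w i) powr (2 * q - 1) / X i)..
      K * ((v i - w i) powr q * (v i + p * w i) powr (q - 1) / X i)}"
    using bounds by simp
qed

lemma cubic_bounds_deviation:
  fixes f v w X :: real
  assumes "0 \<le> w" "w \<le> v" "0 < X"
    and lower: "2 / 9 * ((v - w) ^ 3 / X) \<le> f" and upper: "f \<le> 2 / 9 * ((v - w) ^ 2 * (v + 2 * w) / X)"
  shows "\<bar>f - 2 / 9 * (v ^ 3 / X)\<bar> \<le> v ^ 2 * w / X"
proof -
  have "(v - w) ^ 3 = v ^ 3 - 3 * v ^ 2 * w + w ^ 2 * (3 * v - w)"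
    and "(v - w) ^ 2 * (v + 2 * w) = v ^ 3 - w ^ 2 * (3 * v - 2 * w)"
    by (simp_all add: power2_eq_square power3_eq_cube algebra_simps)
  moreover have "0 \<le> w ^ 2 * (3 * v - w)" "0 \<le> w ^ 2 * (3 * v - 2 * w)"
    using assms by simp_all
  ultimately have "v ^ 3 - 3 * v ^ 2 * w \<le> (v - w) ^ 3" "(v - w) ^ 2 * (v + 2 * w) \<le> v ^ 3"
    by linarith+
  then have "2 / 9 * ((v ^ 3 - 3 * v ^ 2 * w) / X) \<le> 2 / 9 * ((v - w) ^ 3 / X)"
    and "2 / 9 * ((v - w) ^ 2 * (v + 2 * w) / X) \<le> 2 / 9 * (v ^ 3 / X)"
    using \<open>0 < X\<close> by (simp_all add: divide_right_mono)
  then have "2 / 9 * ((v ^ 3 - 3 * v ^ 2 * w) / X) \<le> f" "f \<le> 2 / 9 * (v ^ 3 / X)"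
    using lower upper by linarith+
  moreover have "2 / 9 * ((v ^ 3 - 3 * v ^ 2 * w) / X) = 2 / 9 * (v ^ 3 / X) - 2 / 3 * (v ^ 2 * w / X)"
    using \<open>0 < X\<close> by (simp add: field_simps)
  moreover have "0 \<le> v ^ 2 * w / X"
    using assms by simp
  ultimately show ?thesis
    by linarith
qed

lemma real_of_ereal_between:
  "ereal a \<le> e \<Longrightarrow> e \<le> ereal b \<Longrightarrow> a \<le> real_of_ereal e \<and> real_of_ereal e \<le> b"
  by (cases e) auto

lemma J_cost_quadratic_deviation:
  assumes "0 \<le> w" "w < v" "x < 0" and T: "3 * \<bar>x\<bar> / (v + 2 * w) \<le> T"
  shows "\<bar>real_of_ereal (J_cost 2 T x v w) - 2 / 9 * (v ^ 3 / \<bar>x\<bar>)\<bar> \<le> v ^ 2 * w / \<bar>x\<bar>"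
proof -
  have pq: "1 < (2::real)" "1 < (2::real)" "1 / 2 + 1 / 2 = (1::real)"
    by simp_all
  have K: "1 / 2 * (2 / (2 + 1)) powr 2 = (2 / 9 :: real)"
    by (simp add: powr_numeral power2_eq_square)
  have lower: "ereal (2 / 9 * ((v - w) ^ 3 / \<bar>x\<bar>)) \<le> J_cost 2 T x v w"
    using J_cost_lower_bound[OF pq assms(1-3), of T, unfolded K] assms
    by (simp add: powr_numeral)
  have upper: "J_cost 2 T x v w \<le> ereal (2 / 9 * ((v - w) ^ 2 * (v + 2 * w) / \<bar>x\<bar>))"
    using J_cost_upper_bound[OF pq assms(1-3), unfolded K] assms
    by (simp add: powr_numeral)
  show ?thesis
    using real_of_ereal_between[OF lower upper] assms by (intro cubic_bounds_deviation) auto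
qed

lemma eventually_J_cost_bounds:
  fixes p q T :: real and x v w :: "nat \<Rightarrow> real"
  assumes pq: "1 < p" "1 < q" "1 / p + 1 / q = 1" and "0 < T"
    and x: "\<And>i. x i < 0" and v: "\<And>i. 0 < v i" and w: "\<And>i. 0 \<le> w i"
    and xv: "(\<lambda>i. \<bar>x i\<bar> / v i) \<longlonglongrightarrow> 0" and wv: "(\<lambda>i. w i / v i) \<longlonglongrightarrow> 0"
  shows "\<forall>\<^sub>F i in sequentially.
    ereal (1 / q * (p / (p + 1)) powr q * ((v i - w i) powr (2 * q - 1) / \<bar>x i\<bar> powr (q - 1)))
      \<le> J_cost q T (x i) (v i) (w i) \<and>
    J_cost q T (x i) (v i) (w i)
      \<le> ereal (1 / q * (p / (p + 1)) powr q
                 * ((v i - w i) powr q * (v i + p * w i) powr (q - 1) / \<bar>x i\<bar> powr (q - 1)))"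
proof -
  have "0 \<le> p"
    using pq by simp
  from eventually_profile_duration_le[OF this \<open>0 < T\<close> v w xv wv] show ?thesis
  proof eventually_elim
    case (elim i)
    then show ?case
      using J_cost_lower_bound[OF pq w[of i] _ x[of i]] J_cost_upper_bound[OF pq w[of i] _ x[of i]]
      by simp
  qed
qed

lemma J_cost_quadratic_bigo:
  fixes T :: real and x v w :: "nat \<Rightarrow> real"
  assumes "0 < T" and x: "\<And>i. x i < 0" and v: "\<And>i. 0 < v i" and w: "\<And>i. 0 \<le> w i"
    and xv: "(\<lambda>i. \<bar>x i\<bar> / v i) \<longlonglongrightarrow> 0" and wv: "(\<lambda>i. w i / v i) \<longlonglongrightarrow> 0"
  shows "(\<lambda>i. real_of_ereal (J_cost 2 T (x i) (v i) (w i)) - 2 / 9 * (v i ^ 3 / \<bar>x i\<bar>))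
           \<in> O(\<lambda>i. v i ^ 2 * w i / \<bar>x i\<bar>)"
proof (rule bigoI[of _ 1])
  have "0 \<le> (2::real)"
    by simp
  from eventually_profile_duration_le[OF this \<open>0 < T\<close> v w xv wv]
  show "\<forall>\<^sub>F i in sequentially.
      norm (real_of_ereal (J_cost 2 T (x i) (v i) (w i)) - 2 / 9 * (v i ^ 3 / \<bar>x i\<bar>))
        \<le> 1 * norm (v i ^ 2 * w i / \<bar>x i\<bar>)"
  proof eventually_elim
    case (elim i)
    then show ?case
      using J_cost_quadratic_deviation[OF w[of i] _ x[of i], of "v i" T] w[of i] by simp
  qed
qed

theorem proposition2p5:
  fixes q T c :: real and x v w :: "nat \<Rightarrow> real"
  assumes q: "1 < q" and T: "0 < T" and c: "0 < c"
    and x_neg: "\<And>i. x i < 0" and v_pos: "\<And>i. 0 < v i"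
    and xv: "(\<lambda>i. \<bar>x i\<bar> / v i) \<longlonglongrightarrow> 0"
    and lower: "\<And>i. v i powr (2 * q - 1) / \<bar>x i\<bar> powr (q - 1) > c"
    and w_nonneg: "\<And>i. 0 \<le> w i" and w_le: "\<And>i. w i \<le> v i"
    and wv: "(\<lambda>i. w i / v i) \<longlonglongrightarrow> 0"
  shows "(\<forall>\<^sub>F i in sequentially. J_cost q T (x i) (v i) (w i) < \<infinity>) \<and>
         (\<lambda>i. real_of_ereal (J_cost q T (x i) (v i) (w i)))
            \<sim>[sequentially] (\<lambda>i. q powr (q - 1) / (2 * q - 1) powr q *
                                   (v i powr (2 * q - 1) / \<bar>x i\<bar> powr (q - 1))) \<and>
         (q = 2 \<and> (\<lambda>i. v i ^ 2 * w i / \<bar>x i\<bar>) \<longlonglongrightarrow> 0 \<longrightarrow>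
         (\<lambda>i. real_of_ereal (J_cost q T (x i) (v i) (w i)) - 2 / 9 * (v i ^ 3 / \<bar>x i\<bar>))
            \<in> O(\<lambda>i. v i ^ 2 * w i / \<bar>x i\<bar>))"
proof -
  define p where "p = q / (q - 1)"
  have pq: "1 < p" "1 < q" "1 / p + 1 / q = 1"
    using q by (auto simp: p_def field_simps)
  have K: "1 / q * (p / (p + 1)) powr q = q powr (q - 1) / (2 * q - 1) powr q"
    using conjugate_exponent_constant[OF q] by (simp add: p_def)
  note bounds = eventually_J_cost_bounds[OF pq T x_neg v_pos w_nonneg xv wv, unfolded K]
  have "\<forall>\<^sub>F i in sequentially. J_cost q T (x i) (v i) (w i) < \<infinity>"
    using bounds by eventually_elim (auto intro: le_less_trans)
  moreover have "(\<lambda>i. real_of_ereal (J_cost q T (x i) (v i) (w i)))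
      \<sim>[sequentially] (\<lambda>i. q powr (q - 1) / (2 * q - 1) powr q *
                             (v i powr (2 * q - 1) / \<bar>x i\<bar> powr (q - 1)))"
    using bounds pq
    by (intro asymp_equiv_between_power_bounds[of p v w] v_pos w_nonneg w_le wv)
       (auto elim!: eventually_mono dest: real_of_ereal_between)
  moreover note J_cost_quadratic_bigo[OF T x_neg v_pos w_nonneg xv wv]
  ultimately show ?thesis
    by blast
qed

end
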